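(* Let $P \in \mathbb{C}[X]$ be a polynomial of degree $d$ with exactly $r \ge 2$ distinct complex roots, and let $V = \{v_1, \dots, v_r\} \subset \mathbb{C}$ be the set of its distinct roots. For a root $v$ of $P$, let $\mathrm{sep}(P, v) = \min\{|v - w| : w \in V,\ w \ne v\}$. Then for every subset $V' \subset V$, $$ \prod_{v \in V'}\mathrm{sep}(P, v) \ \ge\ |\mathrm{sDisc}_{d-r}(P)| \, \mathrm{M}(P)^{-2(r-1)} \Big(\frac{r}{\sqrt{3}}\Big)^{-\#V'} \,r^{-r} \, \Big(\frac13\Big)^{\min \{d,\, 2d-2r\}/3}. $$
   Context: Write $P = a_d \prod_{j=1}^r (X - v_j)^{m_j}$ with $a_d \ne 0$, $v_1,\dots,v_r$ pairwise distinct, $m_j \in \mathbb{N}$, $\sum_j m_j = d$; let $x_1,\dots,x_d$ be the roots of $P$ listed with multiplicity. The Mahler measure is $\mathrm{M}(P) = |a_d| \prod_{i=1}^d \max\{1,|x_i|\}$. For $0 \le k < d$, the $k$-th subdiscriminant is $\mathrm{sDisc}_k(P) = a_d^{2(d-k)-2} \sum_{I \subset \{1,\dots,d\},\ |I| = d-k} \ \prod_{i,j \in I,\ i<j} (x_i - x_j)^2$. In particular $|\mathrm{sDisc}_{d-r}(P)|^{1/2} = |a_d|^{r-1} \big(\prod_{j=1}^r m_j\big)^{1/2} \prod_{1\le i<j\le r}|v_i - v_j|$. *)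

theory Defs
  imports "HOL-Analysis.Analysis" "HOL-Computational_Algebra.Polynomial"
begin

text \<open>Roots of P listed with multiplicity, as a list x_0,...,x_{d-1} (any enumeration;
  the quantities below are symmetric in the roots, so the choice does not matter).\<close>
definition root_list :: "complex poly \<Rightarrow> complex list" where
  "root_list P = (SOME xs. mset xs = proots P)"

definition mahler_measure :: "complex poly \<Rightarrow> real" where
  "mahler_measure P = cmod (lead_coeff P) * prod_mset (image_mset (\<lambda>x. max 1 (cmod x)) (proots P))"

definition sDisc :: "nat \<Rightarrow> complex poly \<Rightarrow> complex" where
  "sDisc k P = (let d = degree P; xs = root_list P in
     lead_coeff P ^ (2 * (d - k) - 2) *
     (\<Sum>I \<in> {I. I \<subseteq> {0..<d} \<and> card I = d - k}.
        \<Prod>p \<in> {(i, j). i \<in> I \<and> j \<in> I \<and> i < j}. (xs ! fst p - xs ! snd p) ^ 2))"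

definition root_set :: "complex poly \<Rightarrow> complex set" where
  "root_set P = {x. poly P x = 0}"

definition sep :: "complex poly \<Rightarrow> complex \<Rightarrow> real" where
  "sep P v = Min {cmod (v - w) | w. w \<in> root_set P \<and> w \<noteq> v}"

end

theory Submission
  imports Defs "Jordan_Normal_Form.Determinant" "HOL-Computational_Algebra.Fundamental_Theorem_Algebra"
begin

(* Let R be the set of the r distinct roots of P. Scaling the row of v in the Vandermonde matrix
   of R by max(1,|v|)^-(r-1) puts all its entries into the unit disc, and turns its squared
   determinant into  prod_{v<>w} |v - w| / prod_v max(1,|v|)^(2(r-1)).  For v in V' let w be a
   nearest other root: subtracting a suitable multiple of the row of w from the row of v leaves a
   row whose k-th entry is at most k |v - w| or (r - 1 - k) |v - w|, so Hadamard's inequality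
   bounds the squared determinant by  prod_{v in V'} sep(v)^2 * (r^3/3)^#V' * r^(r - #V').
   These row operations are unimodular only when every partner w lies on the same side of its v
   in a fixed ordering of R, so V' is split into two such halves and the two bounds multiplied.

   On the other side, only the index sets meeting every distinct root exactly once contribute to
   sDisc_{d-r}(P), whence  |sDisc_{d-r}(P)| <= |a_d|^(2(r-1)) * prod_j m_j * prod_{v<>w} |v - w|;
   finally  prod_j m_j <= 3^(min(d, 2d-2r)/3)  and  |a_d| * prod_v max(1,|v|) <= M(P). *)

section \<open>Determinants\<close>

lemma det_triangular:
  fixes A :: "'a :: comm_ring_1 mat"
  assumes A: "A \<in> carrier_mat n n"
    and tri: "(\<forall>i<n. \<forall>j<n. i < j \<longrightarrow> A $$ (i, j) = 0) \<or> (\<forall>i<n. \<forall>j<n. j < i \<longrightarrow> A $$ (i, j) = 0)"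
  shows "Determinant.det A = (\<Prod>i<n. A $$ (i, i))"
proof -
  have "Determinant.det A = prod_list (diag_mat A)"
    using tri
  proof
    assume "\<forall>i<n. \<forall>j<n. j < i \<longrightarrow> A $$ (i, j) = 0"
    then show ?thesis
      by (intro det_upper_triangular[OF _ A]) (use A in \<open>auto simp: upper_triangular_def\<close>)
  qed (auto intro!: det_lower_triangular[OF _ A])
  then show ?thesis
    using A by (simp add: prod_list_diag_prod atLeast0LessThan)
qed

lemma det_scale_rows:
  fixes A :: "'a :: comm_ring_1 mat"
  assumes A: "A \<in> carrier_mat n n"
  shows "Determinant.det (mat n n (\<lambda>(i, k). c i * A $$ (i, k))) = (\<Prod>i<n. c i) * Determinant.det A"
proof -
  define D where "D = mat n n (\<lambda>(i, j). if i = j then c i else 0)"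
  have D: "D \<in> carrier_mat n n" unfolding D_def by auto
  have "mat n n (\<lambda>(i, k). c i * A $$ (i, k)) = D * A"
  proof (rule eq_matI)
    fix i k assume "i < dim_row (D * A)" "k < dim_col (D * A)"
    then have i: "i < n" and k: "k < n" using A D by auto
    have "(D * A) $$ (i, k) = (\<Sum>j\<in>{0..<n}. (if j = i then c i * A $$ (i, k) else 0))"
      using i k A D by (simp add: scalar_prod_def D_def if_distrib[of "\<lambda>x. x * _"] cong: if_cong)
    then show "mat n n (\<lambda>(i, k). c i * A $$ (i, k)) $$ (i, k) = (D * A) $$ (i, k)"
      using i k by simp
  qed (use A D in auto)
  moreover have "Determinant.det D = (\<Prod>i<n. c i)"
    using det_triangular[OF D] by (simp add: D_def)
  ultimately show ?thesis
    using det_mult[OF D A] by simp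
qed

lemma det_eliminate_rows:
  fixes H :: "'a :: comm_ring_1 mat"
  assumes H: "H \<in> carrier_mat n n" and p: "\<And>i. i \<in> T \<Longrightarrow> p i < n"
    and ordered: "(\<forall>i\<in>T. i < p i) \<or> (\<forall>i\<in>T. p i < i)"
  shows "Determinant.det (mat n n (\<lambda>(i, k). H $$ (i, k) - (if i \<in> T then l i * H $$ (p i, k) else 0)))
    = Determinant.det H"
proof -
  define N where "N = mat n n (\<lambda>(i, j). if i = j then 1 else if i \<in> T \<and> j = p i then - l i else 0)"
  have N: "N \<in> carrier_mat n n" unfolding N_def by auto
  have p_ne: "p i \<noteq> i" if "i \<in> T" for i
    using ordered that by auto
  have "mat n n (\<lambda>(i, k). H $$ (i, k) - (if i \<in> T then l i * H $$ (p i, k) else 0)) = N * H"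
  proof (rule eq_matI)
    fix i k assume "i < dim_row (N * H)" "k < dim_col (N * H)"
    then have i: "i < n" and k: "k < n" using N H by auto
    have "(N * H) $$ (i, k) = (\<Sum>j\<in>{0..<n}. (if j = i then H $$ (i, k) else 0) +
        (if j = p i \<and> i \<in> T then - l i * H $$ (j, k) else 0))"
      using i k N H p_ne[of i] by (auto simp: scalar_prod_def N_def intro!: sum.cong)
    also have "\<dots> = H $$ (i, k) - (if i \<in> T then l i * H $$ (p i, k) else 0)"
      using i p[of i] by (simp add: sum.distrib)
    finally show "mat n n (\<lambda>(i, k). H $$ (i, k) - (if i \<in> T then l i * H $$ (p i, k) else 0)) $$ (i, k)
        = (N * H) $$ (i, k)"
      using i k by simp
  qed (use N H in auto)
  moreover have "Determinant.det N = 1"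
  proof -
    have "(\<forall>i<n. \<forall>j<n. i < j \<longrightarrow> N $$ (i, j) = 0) \<or> (\<forall>i<n. \<forall>j<n. j < i \<longrightarrow> N $$ (i, j) = 0)"
      using ordered
    proof
      assume "\<forall>i\<in>T. i < p i"
      then have "\<forall>i<n. \<forall>j<n. j < i \<longrightarrow> N $$ (i, j) = 0" by (auto simp: N_def)
      then show ?thesis ..
    next
      assume "\<forall>i\<in>T. p i < i"
      then have "\<forall>i<n. \<forall>j<n. i < j \<longrightarrow> N $$ (i, j) = 0" by (auto simp: N_def)
      then show ?thesis ..
    qed
    then show ?thesis
      using det_triangular[OF N] by (simp add: N_def)
  qed
  ultimately show ?thesis
    using det_mult[OF N H] by simp
qed

lemma det_mult_conjugate_transpose:
  assumes B: "B \<in> carrier_mat n n"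
  shows "Determinant.det (B * map_mat cnj (transpose_mat B)) = complex_of_real ((cmod (Determinant.det B))\<^sup>2)"
proof -
  interpret cnj: comm_ring_hom cnj
    by unfold_locales auto
  have "Determinant.det (map_mat cnj (transpose_mat B)) = cnj (Determinant.det B)"
    using det_transpose[OF B] by simp
  then show ?thesis
    using det_mult[OF B, of "map_mat cnj (transpose_mat B)"] B
    by (simp add: complex_mult_cnj cmod_power2 del: of_real_power)
qed

section \<open>Hadamard's inequality\<close>

definition cinner :: "nat \<Rightarrow> (nat \<Rightarrow> complex) \<Rightarrow> (nat \<Rightarrow> complex) \<Rightarrow> complex" where
  "cinner n x y = (\<Sum>k<n. x k * cnj (y k))"

definition csq_norm :: "nat \<Rightarrow> (nat \<Rightarrow> complex) \<Rightarrow> real" where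
  "csq_norm n x = (\<Sum>k<n. (cmod (x k))\<^sup>2)"

lemma cinner_self: "cinner n x x = complex_of_real (csq_norm n x)"
  unfolding cinner_def csq_norm_def of_real_sum
  by (rule sum.cong) (auto simp: complex_mult_cnj cmod_power2 simp del: of_real_power)

lemma csq_norm_nonneg: "csq_norm n x \<ge> 0"
  unfolding csq_norm_def by (simp add: sum_nonneg)

lemma cinner_commute: "cinner n y x = cnj (cinner n x y)"
  unfolding cinner_def by (simp add: mult.commute)

lemma cinner_eq_0_if_csq_norm_eq_0:
  assumes "csq_norm n y = 0"
  shows "cinner n x y = 0"
proof -
  have "y k = 0" if "k < n" for k
    using assms that unfolding csq_norm_def by (subst (asm) sum_nonneg_eq_0_iff) auto
  then show ?thesis
    unfolding cinner_def by (auto intro!: sum.neutral)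
qed

lemma cinner_diff_sum_left:
  "cinner n (\<lambda>k. x k - (\<Sum>j\<in>J. c j * y j k)) z = cinner n x z - (\<Sum>j\<in>J. c j * cinner n (y j) z)"
  unfolding cinner_def
  by (simp add: left_diff_distrib sum_subtractf sum_distrib_left sum_distrib_right mult.assoc
      sum.swap[of _ J])

text \<open>Gram--Schmidt orthogonalisation of the rows \<open>a 0, a 1, \<dots>\<close> of length \<open>n\<close>; no linear
  independence is needed, since a vector of norm zero gets the coefficient \<open>c / 0 = 0\<close>.\<close>

function gram_schmidt :: "nat \<Rightarrow> (nat \<Rightarrow> nat \<Rightarrow> complex) \<Rightarrow> nat \<Rightarrow> nat \<Rightarrow> complex" where
  "gram_schmidt n a i = (\<lambda>k. a i k -
     (\<Sum>j<i. cinner n (a i) (gram_schmidt n a j) / csq_norm n (gram_schmidt n a j)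
        * gram_schmidt n a j k))"
  by auto

termination by (relation "Wellfounded.measure (\<lambda>(n, a, i). i)") auto

declare gram_schmidt.simps [simp del]

definition gram_schmidt_coeff :: "nat \<Rightarrow> (nat \<Rightarrow> nat \<Rightarrow> complex) \<Rightarrow> nat \<Rightarrow> nat \<Rightarrow> complex" where
  "gram_schmidt_coeff n a i j = cinner n (a i) (gram_schmidt n a j) / csq_norm n (gram_schmidt n a j)"

lemma gram_schmidt_eq:
  "gram_schmidt n a i = (\<lambda>k. a i k - (\<Sum>j<i. gram_schmidt_coeff n a i j * gram_schmidt n a j k))"
  by (subst gram_schmidt.simps) (simp add: gram_schmidt_coeff_def)

lemma gram_schmidt_orthogonal_lt:
  "l < i \<Longrightarrow> cinner n (gram_schmidt n a i) (gram_schmidt n a l) = 0"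
proof (induction i arbitrary: l rule: less_induct)
  case (less i)
  let ?g = "gram_schmidt n a"
  have orth: "cinner n (?g j) (?g l) = 0" if "j < i" "j \<noteq> l" for j
  proof (cases "l < j")
    case True
    then show ?thesis using less.IH that by blast
  next
    case False
    then have "cinner n (?g l) (?g j) = 0" using less that by auto
    then show ?thesis by (subst cinner_commute) simp
  qed
  have "cinner n (?g i) (?g l)
      = cinner n (a i) (?g l) - (\<Sum>j<i. gram_schmidt_coeff n a i j * cinner n (?g j) (?g l))"
    by (subst gram_schmidt_eq) (rule cinner_diff_sum_left)
  also have "(\<Sum>j<i. gram_schmidt_coeff n a i j * cinner n (?g j) (?g l))
      = gram_schmidt_coeff n a i l * cinner n (?g l) (?g l)"
    using less.prems by (subst sum.remove[of _ l]) (auto simp: orth intro!: sum.neutral)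
  also have "cinner n (a i) (?g l) - \<dots> = 0"
    by (cases "csq_norm n (?g l) = 0")
      (simp_all add: cinner_eq_0_if_csq_norm_eq_0 gram_schmidt_coeff_def cinner_self)
  finally show ?case .
qed

lemma gram_schmidt_orthogonal:
  "l \<noteq> i \<Longrightarrow> cinner n (gram_schmidt n a i) (gram_schmidt n a l) = 0"
  using gram_schmidt_orthogonal_lt[of l i] gram_schmidt_orthogonal_lt[of i l]
    cinner_commute[of n "gram_schmidt n a i" "gram_schmidt n a l"]
  by (cases "l < i") auto

lemma gram_schmidt_csq_norm_le: "csq_norm n (gram_schmidt n a i) \<le> csq_norm n (a i)"
proof -
  let ?g = "gram_schmidt n a"
  define s where "s = (\<lambda>k. \<Sum>j<i. gram_schmidt_coeff n a i j * ?g j k)"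
  have a_eq: "a i = (\<lambda>k. ?g i k + s k)"
    using gram_schmidt_eq[of n a i] unfolding s_def by auto
  have "cinner n (?g i) s = (\<Sum>j<i. cnj (gram_schmidt_coeff n a i j) * cinner n (?g i) (?g j))"
    unfolding s_def cinner_def
    by (simp add: sum_distrib_left sum.swap[of _ "{..<i}"] mult.commute mult.left_commute)
  also have "\<dots> = 0"
    by (auto simp: gram_schmidt_orthogonal intro!: sum.neutral)
  finally have orth: "cinner n (?g i) s = 0" "cinner n s (?g i) = 0"
    using cinner_commute[of n s "?g i"] by simp_all
  have "cinner n (a i) (a i) = cinner n (?g i) (?g i) + cinner n s s + cinner n (?g i) s + cinner n s (?g i)"
    unfolding a_eq cinner_def by (simp add: algebra_simps sum.distrib)
  then have "csq_norm n (a i) = csq_norm n (?g i) + csq_norm n s"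
    using orth by (simp add: cinner_self flip: of_real_add)
  then show ?thesis
    using csq_norm_nonneg[of n s] by simp
qed

lemma det_gram_schmidt:
  fixes A :: "complex mat"
  assumes A: "A \<in> carrier_mat n n"
  shows "Determinant.det (mat n n (\<lambda>(i, k). gram_schmidt n (\<lambda>i k. A $$ (i, k)) i k))
    = Determinant.det A"
proof -
  define a where "a = (\<lambda>i k. A $$ (i, k))"
  let ?g = "gram_schmidt n a"
  define B where "B = mat n n (\<lambda>(i, k). ?g i k)"
  define L where "L = mat n n (\<lambda>(i, j). if j < i then gram_schmidt_coeff n a i j else of_bool (i = j))"
  have B: "B \<in> carrier_mat n n" and L: "L \<in> carrier_mat n n"
    unfolding B_def L_def by auto
  have "A = L * B"
  proof (rule eq_matI)
    fix i k assume "i < dim_row (L * B)" "k < dim_col (L * B)"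
    then have i: "i < n" and k: "k < n" using L B by auto
    have split: "{..<n} = {..<i} \<union> {i} \<union> {Suc i..<n}" using i by auto
    have "(L * B) $$ (i, k) = (\<Sum>j<n. L $$ (i, j) * ?g j k)"
      using i k L B by (simp add: scalar_prod_def atLeast0LessThan B_def)
    also have "\<dots> = (\<Sum>j<i. gram_schmidt_coeff n a i j * ?g j k) + ?g i k"
      unfolding split using i
      by (subst sum.union_disjoint, auto simp: L_def intro!: sum.neutral)+
    also have "\<dots> = A $$ (i, k)"
      by (subst gram_schmidt_eq) (simp add: a_def)
    finally show "A $$ (i, k) = (L * B) $$ (i, k)" ..
  qed (use A L B in auto)
  moreover have "Determinant.det L = 1"
    using det_triangular[OF L] by (simp add: L_def)
  ultimately show ?thesis
    using det_mult[OF L B] unfolding B_def a_def by simp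
qed

theorem hadamard_inequality:
  fixes A :: "complex mat"
  assumes A: "A \<in> carrier_mat n n"
  shows "(cmod (Determinant.det A))\<^sup>2 \<le> (\<Prod>i<n. \<Sum>k<n. (cmod (A $$ (i, k)))\<^sup>2)"
proof -
  define a where "a = (\<lambda>i k. A $$ (i, k))"
  let ?g = "gram_schmidt n a"
  define B where "B = mat n n (\<lambda>(i, k). ?g i k)"
  define BH where "BH = map_mat cnj (transpose_mat B)"
  have B: "B \<in> carrier_mat n n" and BH: "BH \<in> carrier_mat n n"
    unfolding B_def BH_def by auto
  have gram: "(B * BH) $$ (i, j) = cinner n (?g i) (?g j)" if "i < n" "j < n" for i j
    using that B BH unfolding BH_def B_def by (simp add: scalar_prod_def cinner_def atLeast0LessThan)
  have "complex_of_real ((cmod (Determinant.det A))\<^sup>2) = Determinant.det (B * BH)"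
    unfolding BH_def det_mult_conjugate_transpose[OF B]
    using det_gram_schmidt[OF A] unfolding B_def a_def by simp
  also have "\<dots> = (\<Prod>i<n. cinner n (?g i) (?g i))"
    using B BH by (subst det_triangular) (auto simp: gram gram_schmidt_orthogonal)
  also have "\<dots> = complex_of_real (\<Prod>i<n. csq_norm n (?g i))"
    by (simp add: cinner_self)
  finally have "(cmod (Determinant.det A))\<^sup>2 = (\<Prod>i<n. csq_norm n (?g i))"
    using of_real_eq_iff by blast
  also have "\<dots> \<le> (\<Prod>i<n. csq_norm n (a i))"
    by (intro prod_mono) (auto simp: csq_norm_nonneg gram_schmidt_csq_norm_le)
  finally show ?thesis
    unfolding csq_norm_def a_def .
qed

section \<open>Vandermonde determinants\<close>

definition vandermonde :: "'a :: comm_ring_1 list \<Rightarrow> 'a mat" where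
  "vandermonde zs = mat (length zs) (length zs) (\<lambda>(i, k). zs ! i ^ k)"

lemma vandermonde_carrier [simp]: "vandermonde zs \<in> carrier_mat (length zs) (length zs)"
  unfolding vandermonde_def by auto

lemma prod_vandermonde_Cons:
  "(\<Prod>j<length (z # zs). \<Prod>i<j. (z # zs) ! j - (z # zs) ! i)
     = (\<Prod>i<length zs. zs ! i - z) * (\<Prod>j<length zs. \<Prod>i<j. zs ! j - zs ! i)"
  by (simp add: prod.lessThan_Suc_shift prod.distrib del: prod.lessThan_Suc)

text \<open>Multiplying from the right by the matrix of the column operations
  \<open>col\<^sub>k := col\<^sub>k - z col\<^sub>k\<^sub>-\<^sub>1\<close> clears the first row except its leading \<open>1\<close>, and the remaining
  minor is the Vandermonde matrix of \<open>zs\<close> with row \<open>i\<close> scaled by \<open>zs ! i - z\<close>.\<close>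

theorem det_vandermonde:
  "Determinant.det (vandermonde zs) = (\<Prod>j<length zs. \<Prod>i<j. zs ! j - zs ! i)"
proof (induction zs)
  case Nil
  then show ?case unfolding vandermonde_def by (simp add: det_dim_zero)
next
  case (Cons z zs)
  define m where "m = length zs"
  define n where "n = Suc m"
  define V where "V = vandermonde (z # zs)"
  define U where "U = mat n n (\<lambda>(i, k). if i = k then 1 else if Suc i = k then - z else 0)"
  define C where "C = V * U"
  have V: "V \<in> carrier_mat n n"
    using vandermonde_carrier[of "z # zs"] unfolding V_def n_def m_def by simp
  have U: "U \<in> carrier_mat n n" unfolding U_def by auto
  have C: "C \<in> carrier_mat n n" unfolding C_def using V U by auto
  have "Determinant.det U = 1"
    using det_triangular[OF U] by (simp add: U_def)
  then have det_C: "Determinant.det C = Determinant.det V"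
    using det_mult[OF V U] unfolding C_def by simp
  have C_entry: "C $$ (i, k) = (if k = 0 then 1 else (z # zs) ! i ^ k - z * (z # zs) ! i ^ (k - 1))"
    if i: "i < n" and k: "k < n" for i k
  proof -
    have "C $$ (i, k) = (\<Sum>j\<in>{0..<n}. (if j = k then (z # zs) ! i ^ k else 0) +
        (if Suc j = k then - z * (z # zs) ! i ^ j else 0))"
      unfolding C_def using i k V U
      by (auto simp: scalar_prod_def V_def U_def vandermonde_def n_def m_def intro!: sum.cong)
    also have "\<dots> = (if k = 0 then 1 else (z # zs) ! i ^ k - z * (z # zs) ! i ^ (k - 1))"
      using k by (cases k) (simp_all add: sum.distrib sum.delta')
    finally show ?thesis .
  qed
  have minor: "mat_delete C 0 0 = mat m m (\<lambda>(i, k). (zs ! i - z) * vandermonde zs $$ (i, k))"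
    using C by (intro eq_matI) (auto simp: mat_delete_def C_entry n_def vandermonde_def m_def algebra_simps)
  have "Determinant.det C = (\<Sum>j<n. C $$ (0, j) * cofactor C 0 j)"
    by (rule laplace_expansion_row[OF C]) (simp add: n_def)
  also have "\<dots> = C $$ (0, 0) * cofactor C 0 0"
  proof -
    have "C $$ (0, j) = 0" if "0 < j" "j < n" for j
      using that C_entry[of 0 j] by (cases j) (auto simp: n_def)
    then show ?thesis
      by (subst sum.remove[of _ 0]) (auto simp: n_def intro!: sum.neutral)
  qed
  also have "\<dots> = (\<Prod>i<m. zs ! i - z) * Determinant.det (vandermonde zs)"
    using C_entry[of 0 0] det_scale_rows[OF vandermonde_carrier[of zs]]
    by (simp add: cofactor_def minor n_def m_def)
  finally show ?case
    using det_C Cons.IH unfolding V_def m_def prod_vandermonde_Cons by simp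
qed

definition pairwise_dist_prod :: "complex set \<Rightarrow> real" where
  "pairwise_dist_prod S = (\<Prod>(v, w)\<in>{(v, w). v \<in> S \<and> w \<in> S \<and> v \<noteq> w}. cmod (v - w))"

lemma pairwise_dist_prod_nonneg: "pairwise_dist_prod S \<ge> 0"
  unfolding pairwise_dist_prod_def by (simp add: prod_nonneg case_prod_beta)

lemma prod_sq_dist_less_pairs:
  fixes f :: "nat \<Rightarrow> complex"
  assumes I: "finite I" and inj: "inj_on f I"
  shows "(\<Prod>(i, j)\<in>{(i, j). i \<in> I \<and> j \<in> I \<and> i < j}. (cmod (f i - f j))\<^sup>2) = pairwise_dist_prod (f ` I)"
proof -
  define c where "c = (\<lambda>(i, j). cmod (f i - f j))"
  define L where "L = {(i, j). i \<in> I \<and> j \<in> I \<and> i < j}"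
  define D where "D = {(i, j). i \<in> I \<and> j \<in> I \<and> i \<noteq> j}"
  have fin: "finite L" "finite (prod.swap ` L)"
    using I unfolding L_def by (auto intro: finite_subset[of _ "I \<times> I"])
  have D_eq: "D = L \<union> prod.swap ` L" unfolding D_def L_def by auto
  have "prod c (prod.swap ` L) = prod c L"
    by (subst prod.reindex) (auto simp: inj_on_def c_def norm_minus_commute intro!: prod.cong)
  then have "prod c D = (\<Prod>p\<in>L. (c p)\<^sup>2)"
    unfolding D_eq using fin
    by (subst prod.union_disjoint) (auto simp: L_def power2_eq_square prod.distrib)
  moreover have "{(v, w). v \<in> f ` I \<and> w \<in> f ` I \<and> v \<noteq> w} = map_prod f f ` D"
    using inj unfolding D_def inj_on_def by auto
  moreover have "inj_on (map_prod f f) D"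
    using inj unfolding D_def inj_on_def by auto
  ultimately show ?thesis
    unfolding pairwise_dist_prod_def by (simp add: prod.reindex c_def L_def case_prod_beta)
qed

lemma sq_norm_det_vandermonde:
  assumes "distinct zs"
  shows "(cmod (Determinant.det (vandermonde zs)))\<^sup>2 = pairwise_dist_prod (set zs)"
proof -
  define n where "n = length zs"
  have "cmod (Determinant.det (vandermonde zs)) = (\<Prod>j<n. \<Prod>i<j. cmod (zs ! j - zs ! i))"
    unfolding det_vandermonde n_def by (simp add: prod_norm)
  also have "\<dots> = (\<Prod>(j, i)\<in>Sigma {..<n} (\<lambda>j. {..<j}). cmod (zs ! j - zs ! i))"
    by (rule prod.Sigma) auto
  also have "\<dots> = (\<Prod>(i, j)\<in>prod.swap ` Sigma {..<n} (\<lambda>j. {..<j}). cmod (zs ! i - zs ! j))"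
    by (subst prod.reindex) (auto simp: inj_on_def norm_minus_commute intro!: prod.cong)
  also have "prod.swap ` Sigma {..<n} (\<lambda>j. {..<j}) = {(i, j). i \<in> {..<n} \<and> j \<in> {..<n} \<and> i < j}"
    by auto
  finally have "(cmod (Determinant.det (vandermonde zs)))\<^sup>2
      = (\<Prod>(i, j)\<in>{(i, j). i \<in> {..<n} \<and> j \<in> {..<n} \<and> i < j}. (cmod (zs ! i - zs ! j))\<^sup>2)"
    by (simp add: prod_power_distrib case_prod_beta)
  also have "\<dots> = pairwise_dist_prod ((!) zs ` {..<n})"
    by (rule prod_sq_dist_less_pairs) (use assms in \<open>auto simp: n_def intro: inj_on_nth\<close>)
  also have "(!) zs ` {..<n} = set zs"
    unfolding n_def by (auto simp: in_set_conv_nth)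
  finally show ?thesis .
qed

section \<open>Scaled Vandermonde matrices\<close>

lemma norm_power_diff_le:
  fixes a b :: "'a :: real_normed_field"
  assumes "norm a \<le> 1" "norm b \<le> 1"
  shows "norm (a ^ j - b ^ j) \<le> real j * norm (a - b)"
proof -
  have "norm (\<Sum>i<j. b ^ (j - Suc i) * a ^ i) \<le> (\<Sum>i<j. norm (b ^ (j - Suc i) * a ^ i))"
    by (rule norm_sum)
  also have "\<dots> \<le> (\<Sum>i<j. 1)"
    by (intro sum_mono) (auto simp: norm_mult norm_power intro!: mult_le_one power_le_one assms)
  finally have sum_le: "norm (\<Sum>i<j. b ^ (j - Suc i) * a ^ i) \<le> real j" by simp
  have "norm (a ^ j - b ^ j) = norm (a - b) * norm (\<Sum>i<j. b ^ (j - Suc i) * a ^ i)"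
    by (subst power_diff_sumr2) (simp add: norm_mult)
  also have "\<dots> \<le> norm (a - b) * real j"
    by (rule mult_left_mono[OF sum_le]) simp
  finally show ?thesis
    by (simp add: mult.commute)
qed

lemma sum_of_squares_le: "(\<Sum>k<n. (real k)\<^sup>2) \<le> real n ^ 3 / 3"
proof (induction n)
  case (Suc n)
  then have "(\<Sum>k<Suc n. (real k)\<^sup>2) \<le> real n ^ 3 / 3 + (real n)\<^sup>2" by simp
  also have "\<dots> \<le> real (Suc n) ^ 3 / 3" by (simp add: power3_eq_cube power2_eq_square field_simps)
  finally show ?case .
qed simp

text \<open>The row of \<open>z\<close> is scaled by the complex number \<open>shrink z\<close> of modulus \<open>1 / max 1 \<bar>z\<bar>\<close>
  rather than by that real number, so that \<open>shrink z ^ m * z ^ k = shrink z ^ (m - k) * shrunk z ^ k\<close>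
  is a product of powers of two numbers in the unit disc.\<close>

definition shrink :: "complex \<Rightarrow> complex" where
  "shrink z = (if cmod z \<le> 1 then 1 else 1 / z)"

definition shrunk :: "complex \<Rightarrow> complex" where
  "shrunk z = z * shrink z"

lemma norm_shrink: "cmod (shrink z) = 1 / max 1 (cmod z)"
  by (auto simp: shrink_def norm_divide)

lemma norm_shrink_le_1: "cmod (shrink z) \<le> 1"
  by (auto simp: shrink_def norm_divide divide_le_eq_1)

lemma norm_shrunk_le_1: "cmod (shrunk z) \<le> 1"
  by (auto simp: shrunk_def shrink_def norm_divide norm_mult)

lemma shrink_power_mult_power:
  "k \<le> m \<Longrightarrow> shrink z ^ m * z ^ k = shrink z ^ (m - k) * shrunk z ^ k"
  by (simp add: shrunk_def power_mult_distrib power_add[symmetric])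

lemma norm_shrink_power_mult_power_le_1: "k \<le> m \<Longrightarrow> cmod (shrink z ^ m * z ^ k) \<le> 1"
  by (subst shrink_power_mult_power)
    (auto simp: norm_mult norm_power intro!: mult_le_one power_le_one norm_shrink_le_1 norm_shrunk_le_1)

text \<open>Subtracting \<open>elim_factor m v w\<close> times the row of \<open>w\<close> from the row of \<open>v\<close> leaves entries
  bounded by \<open>elim_weight m w k * \<bar>v - w\<bar>\<close>: when \<open>\<bar>w\<bar> \<le> 1\<close> both rows are compared as powers
  \<open>shrunk v ^ k\<close> and \<open>(shrink v * w) ^ k\<close>, otherwise as powers with exponent \<open>m - k\<close>.\<close>

definition elim_factor :: "nat \<Rightarrow> complex \<Rightarrow> complex \<Rightarrow> complex" where
  "elim_factor m v w = (if cmod w \<le> 1 then shrink v ^ m else shrunk v ^ m)"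

definition elim_weight :: "nat \<Rightarrow> complex \<Rightarrow> nat \<Rightarrow> real" where
  "elim_weight m w k = (if cmod w \<le> 1 then real k else real (m - k))"

lemma norm_elim_entry_le:
  assumes "k \<le> m"
  shows "cmod (shrink v ^ m * v ^ k - elim_factor m v w * (shrink w ^ m * w ^ k))
    \<le> elim_weight m w k * cmod (v - w)"
proof (cases "cmod w \<le> 1")
  case True
  then have "shrink w = 1" by (simp add: shrink_def)
  then have "shrink v ^ m * v ^ k - elim_factor m v w * (shrink w ^ m * w ^ k)
      = shrink v ^ (m - k) * (shrunk v ^ k - (shrink v * w) ^ k)"
    using True assms
    by (simp add: elim_factor_def shrink_power_mult_power right_diff_distrib power_mult_distrib
        power_add[symmetric] mult.assoc)
  also have "cmod \<dots> \<le> 1 * (real k * cmod (shrunk v - shrink v * w))"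
    unfolding norm_mult norm_power
    by (intro mult_mono norm_power_diff_le power_le_one)
      (auto simp: norm_shrunk_le_1 norm_shrink_le_1 norm_mult True intro: mult_le_one)
  also have "shrunk v - shrink v * w = shrink v * (v - w)"
    by (simp add: shrunk_def algebra_simps)
  also have "real k * cmod (shrink v * (v - w)) \<le> real k * cmod (v - w)"
    by (intro mult_left_mono) (auto simp: norm_mult intro!: mult_left_le_one_le norm_shrink_le_1)
  finally show ?thesis
    using True by (simp add: elim_weight_def)
next
  case False
  then have w: "shrink w = 1 / w" "w \<noteq> 0" "shrunk w = 1"
    by (auto simp: shrink_def shrunk_def)
  have row_w: "shrink w ^ m * w ^ k = shrink w ^ (m - k)"
    using shrink_power_mult_power[OF assms, of w] w(3) by simp
  have power_split: "shrunk v ^ m = shrunk v ^ k * shrunk v ^ (m - k)"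
    using assms by (simp flip: power_add)
  have "shrink v ^ m * v ^ k - elim_factor m v w * (shrink w ^ m * w ^ k)
      = shrunk v ^ k * (shrink v ^ (m - k) - (shrunk v * shrink w) ^ (m - k))"
    using False
    unfolding elim_factor_def row_w shrink_power_mult_power[OF assms, of v] power_split
      power_mult_distrib
    by (simp add: algebra_simps)
  also have "cmod \<dots> \<le> 1 * (real (m - k) * cmod (shrink v - shrunk v * shrink w))"
    unfolding norm_mult norm_power
    by (intro mult_mono norm_power_diff_le power_le_one)
      (auto simp: norm_shrunk_le_1 norm_shrink_le_1 norm_mult intro: mult_le_one)
  also have "shrink v - shrunk v * shrink w = shrink v * (w - v) / w"
    using w by (simp add: shrunk_def field_simps)
  also have "cmod \<dots> = cmod (shrink v) * cmod (v - w) / cmod w"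
    by (simp add: norm_mult norm_divide norm_minus_commute)
  also have "\<dots> \<le> cmod (v - w)"
  proof -
    have "cmod (shrink v) * cmod (v - w) \<le> cmod w * cmod (v - w)"
      using False norm_shrink_le_1[of v] by (intro mult_right_mono) auto
    then show ?thesis
      using False by (simp add: divide_le_eq mult.commute)
  qed
  finally show ?thesis
    using False by (simp add: elim_weight_def mult_left_mono)
qed

lemma sum_sq_elim_weight_le: "(\<Sum>k<Suc m. (elim_weight m w k)\<^sup>2) \<le> real (Suc m) ^ 3 / 3"
proof (cases "cmod w \<le> 1")
  case True
  then show ?thesis
    using sum_of_squares_le[of "Suc m"] by (simp add: elim_weight_def)
next
  case False
  have "(\<Sum>k<Suc m. (elim_weight m w k)\<^sup>2) = (\<Sum>k<Suc m. (real (Suc m - Suc k))\<^sup>2)"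
    using False by (intro sum.cong) (auto simp: elim_weight_def)
  also have "\<dots> = (\<Sum>k<Suc m. (real k)\<^sup>2)"
    by (rule sum.nat_diff_reindex[where g = "\<lambda>k. (real k)\<^sup>2"])
  finally show ?thesis
    using sum_of_squares_le[of "Suc m"] by simp
qed

lemma sum_sq_elim_row_le:
  "(\<Sum>k<Suc m. (cmod (shrink v ^ m * v ^ k - elim_factor m v w * (shrink w ^ m * w ^ k)))\<^sup>2)
     \<le> (cmod (v - w))\<^sup>2 * (real (Suc m) ^ 3 / 3)"
proof -
  have "(\<Sum>k<Suc m. (cmod (shrink v ^ m * v ^ k - elim_factor m v w * (shrink w ^ m * w ^ k)))\<^sup>2)
      \<le> (\<Sum>k<Suc m. (elim_weight m w k * cmod (v - w))\<^sup>2)"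
    by (intro sum_mono power_mono norm_elim_entry_le) auto
  also have "\<dots> = (cmod (v - w))\<^sup>2 * (\<Sum>k<Suc m. (elim_weight m w k)\<^sup>2)"
    by (simp add: power_mult_distrib sum_distrib_left mult.commute del: sum.lessThan_Suc)
  also have "\<dots> \<le> (cmod (v - w))\<^sup>2 * (real (Suc m) ^ 3 / 3)"
    by (intro mult_left_mono sum_sq_elim_weight_le) auto
  finally show ?thesis .
qed

lemma sum_sq_scaled_row_le: "(\<Sum>k<Suc m. (cmod (shrink v ^ m * v ^ k))\<^sup>2) \<le> real (Suc m)"
proof -
  have "(\<Sum>k<Suc m. (cmod (shrink v ^ m * v ^ k))\<^sup>2) \<le> (\<Sum>k<Suc m. 1)"
    by (intro sum_mono) (simp add: power_le_one norm_shrink_power_mult_power_le_1)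
  then show ?thesis by simp
qed

definition scaled_vandermonde :: "complex list \<Rightarrow> complex mat" where
  "scaled_vandermonde zs =
     mat (length zs) (length zs) (\<lambda>(i, k). shrink (zs ! i) ^ (length zs - 1) * zs ! i ^ k)"

lemma scaled_vandermonde_carrier [simp]:
  "scaled_vandermonde zs \<in> carrier_mat (length zs) (length zs)"
  unfolding scaled_vandermonde_def by auto

lemma pairwise_dist_prod_eq_scaled_vandermonde:
  assumes "distinct zs"
  shows "pairwise_dist_prod (set zs)
    = (\<Prod>v\<in>set zs. max 1 (cmod v) ^ (2 * (length zs - 1)))
      * (cmod (Determinant.det (scaled_vandermonde zs)))\<^sup>2"
proof -
  define n where "n = length zs"
  define M where "M = (\<Prod>v\<in>set zs. max 1 (cmod v) ^ (n - 1))"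
  have M: "M > 0" unfolding M_def by (simp add: prod_pos)
  have "scaled_vandermonde zs = mat n n (\<lambda>(i, k). shrink (zs ! i) ^ (n - 1) * vandermonde zs $$ (i, k))"
    unfolding scaled_vandermonde_def vandermonde_def n_def by (rule eq_matI) auto
  then have "Determinant.det (scaled_vandermonde zs)
      = (\<Prod>i<n. shrink (zs ! i) ^ (n - 1)) * Determinant.det (vandermonde zs)"
    using det_scale_rows[OF vandermonde_carrier[of zs]] by (simp add: n_def)
  then have "cmod (Determinant.det (scaled_vandermonde zs))
      = (\<Prod>i<n. cmod (shrink (zs ! i)) ^ (n - 1)) * cmod (Determinant.det (vandermonde zs))"
    by (simp add: norm_mult norm_power flip: prod_norm)
  also have "(\<Prod>i<n. cmod (shrink (zs ! i)) ^ (n - 1)) = (\<Prod>v\<in>set zs. (1 / max 1 (cmod v)) ^ (n - 1))"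
    using prod.reindex_bij_betw[OF bij_betw_nth[OF assms refl refl], of "\<lambda>v. (1 / max 1 (cmod v)) ^ (n - 1)"]
    by (simp add: norm_shrink n_def)
  also have "\<dots> = 1 / M"
    unfolding M_def by (simp add: prod_dividef power_one_over)
  finally have "cmod (Determinant.det (vandermonde zs)) = M * cmod (Determinant.det (scaled_vandermonde zs))"
    using M by (simp add: field_simps)
  then show ?thesis
    unfolding sq_norm_det_vandermonde[OF assms, symmetric] M_def n_def
    by (simp add: power_mult_distrib prod_power_distrib mult.commute flip: power_mult)
qed

lemma scaled_vandermonde_det_bound:
  assumes T: "T \<subseteq> {..<length zs}" and p: "\<And>i. i \<in> T \<Longrightarrow> p i < length zs"
    and ordered: "(\<forall>i\<in>T. i < p i) \<or> (\<forall>i\<in>T. p i < i)"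
  shows "(cmod (Determinant.det (scaled_vandermonde zs)))\<^sup>2
    \<le> (\<Prod>i\<in>T. (cmod (zs ! i - zs ! p i))\<^sup>2) * (real (length zs) ^ 3 / 3) ^ card T
       * real (length zs) ^ (length zs - card T)"
proof -
  define n where "n = length zs"
  define H where "H = scaled_vandermonde zs"
  define E where "E = mat n n (\<lambda>(i, k). H $$ (i, k) -
    (if i \<in> T then elim_factor (n - 1) (zs ! i) (zs ! p i) * H $$ (p i, k) else 0))"
  have H: "H \<in> carrier_mat n n" unfolding H_def n_def by simp
  have H_entry: "H $$ (i, k) = shrink (zs ! i) ^ (n - 1) * zs ! i ^ k" if "i < n" "k < n" for i k
    using that unfolding H_def scaled_vandermonde_def n_def by simp
  have p_n: "p i < n" if "i \<in> T" for i
    using p[OF that] unfolding n_def .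
  have row_bound: "(\<Sum>k<n. (cmod (E $$ (i, k)))\<^sup>2)
      \<le> (if i \<in> T then (cmod (zs ! i - zs ! p i))\<^sup>2 * (real n ^ 3 / 3) else real n)"
    if i: "i < n" for i
  proof -
    obtain m where n: "n = Suc m" using i by (cases n) auto
    show ?thesis
    proof (cases "i \<in> T")
      case True
      then have "(\<Sum>k<n. (cmod (E $$ (i, k)))\<^sup>2) = (\<Sum>k<Suc m. (cmod (shrink (zs ! i) ^ m * zs ! i ^ k
          - elim_factor m (zs ! i) (zs ! p i) * (shrink (zs ! p i) ^ m * zs ! p i ^ k)))\<^sup>2)"
        using i p_n by (auto simp: E_def H_entry n intro!: sum.cong)
      then show ?thesis
        using True sum_sq_elim_row_le n by simp
    next
      case False
      then have "(\<Sum>k<n. (cmod (E $$ (i, k)))\<^sup>2) = (\<Sum>k<Suc m. (cmod (shrink (zs ! i) ^ m * zs ! i ^ k))\<^sup>2)"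
        using i by (auto simp: E_def H_entry n intro!: sum.cong)
      then show ?thesis
        using False sum_sq_scaled_row_le n by simp
    qed
  qed
  have "(cmod (Determinant.det H))\<^sup>2 = (cmod (Determinant.det E))\<^sup>2"
    unfolding E_def using det_eliminate_rows[OF H p_n ordered] by simp
  also have "\<dots> \<le> (\<Prod>i<n. \<Sum>k<n. (cmod (E $$ (i, k)))\<^sup>2)"
    by (rule hadamard_inequality) (simp add: E_def)
  also have "\<dots> \<le> (\<Prod>i<n. if i \<in> T then (cmod (zs ! i - zs ! p i))\<^sup>2 * (real n ^ 3 / 3) else real n)"
    by (intro prod_mono conjI row_bound sum_nonneg) auto
  also have "\<dots> = (\<Prod>i\<in>T. (cmod (zs ! i - zs ! p i))\<^sup>2) * (real n ^ 3 / 3) ^ card T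
      * real n ^ (n - card T)"
    using T
    by (simp add: prod.If_cases prod.distrib Int_absorb1 Diff_eq[symmetric] card_Diff_subset
        finite_subset n_def del: times_divide_eq_right)
  finally show ?thesis
    unfolding H_def n_def .
qed

lemma pairwise_dist_prod_le_oriented:
  assumes zs: "distinct zs"
    and pos: "\<And>v. v \<in> set zs \<Longrightarrow> pos v < length zs \<and> zs ! pos v = v"
    and V: "V \<subseteq> set zs" and w: "\<And>v. v \<in> V \<Longrightarrow> w v \<in> set zs"
    and ordered: "(\<forall>v\<in>V. pos v < pos (w v)) \<or> (\<forall>v\<in>V. pos (w v) < pos v)"
  shows "pairwise_dist_prod (set zs)
    \<le> (\<Prod>v\<in>set zs. max 1 (cmod v) ^ (2 * (length zs - 1)))
      * ((\<Prod>v\<in>V. (cmod (v - w v))\<^sup>2) * (real (length zs) ^ 3 / 3) ^ card V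
         * real (length zs) ^ (length zs - card V))"
proof -
  have inj: "inj_on pos V"
    using V pos by (metis inj_on_def subsetD)
  define q where "q = (\<lambda>i. pos (w (zs ! i)))"
  have q: "q (pos v) = pos (w v)" "zs ! pos v = v" if "v \<in> V" for v
    using pos[of v] V that unfolding q_def by auto
  have pos_V: "pos ` V \<subseteq> {..<length zs}"
    using V pos by force
  have q_lt: "q i < length zs" if "i \<in> pos ` V" for i
    using that w pos q by force
  have ordered': "(\<forall>i\<in>pos ` V. i < q i) \<or> (\<forall>i\<in>pos ` V. q i < i)"
    using ordered q by auto
  have "(cmod (Determinant.det (scaled_vandermonde zs)))\<^sup>2
      \<le> (\<Prod>i\<in>pos ` V. (cmod (zs ! i - zs ! q i))\<^sup>2) * (real (length zs) ^ 3 / 3) ^ card (pos ` V)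
         * real (length zs) ^ (length zs - card (pos ` V))"
    by (rule scaled_vandermonde_det_bound[OF pos_V q_lt ordered'])
  also have "(\<Prod>i\<in>pos ` V. (cmod (zs ! i - zs ! q i))\<^sup>2) = (\<Prod>v\<in>V. (cmod (v - w v))\<^sup>2)"
    using inj w pos q by (subst prod.reindex) (auto intro!: prod.cong)
  also have "card (pos ` V) = card V"
    using inj by (rule card_image)
  finally show ?thesis
    unfolding pairwise_dist_prod_eq_scaled_vandermonde[OF zs]
    by (intro mult_left_mono) (auto intro: prod_nonneg)
qed

lemma sq_pairwise_dist_prod_le:
  assumes zs: "distinct zs" and V: "V \<subseteq> set zs" and w: "\<And>v. v \<in> V \<Longrightarrow> w v \<in> set zs \<and> w v \<noteq> v"
  shows "(pairwise_dist_prod (set zs))\<^sup>2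
    \<le> (\<Prod>v\<in>set zs. max 1 (cmod v) ^ (2 * (length zs - 1)))\<^sup>2 * (\<Prod>v\<in>V. cmod (v - w v))\<^sup>2
       * (real (length zs) ^ 3 / 3) ^ card V * real (length zs) ^ (2 * length zs - card V)"
proof -
  define n where "n = length zs"
  define c where "c = real n ^ 3 / 3"
  define M where "M = (\<Prod>v\<in>set zs. max 1 (cmod v) ^ (2 * (n - 1)))"
  define B where "B = (\<lambda>V. (\<Prod>v\<in>V. (cmod (v - w v))\<^sup>2) * c ^ card V * real n ^ (n - card V))"
  obtain pos where pos: "\<And>v. v \<in> set zs \<Longrightarrow> pos v < n \<and> zs ! pos v = v"
    using bij_betw_nth[OF zs refl refl] unfolding bij_betw_iff_bijections n_def by auto
  define V1 where "V1 = {v \<in> V. pos v < pos (w v)}"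
  define V2 where "V2 = {v \<in> V. pos (w v) < pos v}"
  have half: "pairwise_dist_prod (set zs) \<le> M * B U" if "U \<subseteq> V"
    and "(\<forall>v\<in>U. pos v < pos (w v)) \<or> (\<forall>v\<in>U. pos (w v) < pos v)" for U
    unfolding M_def B_def c_def n_def
    by (rule pairwise_dist_prod_le_oriented[OF zs _ _ _ that(2)])
      (use pos V w that(1) in \<open>auto simp: n_def\<close>)
  have "pos v \<noteq> pos (w v)" if "v \<in> V" for v
    using that V w pos by (metis subsetD)
  then have "V = V1 \<union> V2"
    unfolding V1_def V2_def by (auto simp: neq_iff)
  moreover have "V1 \<inter> V2 = {}" "finite V1" "finite V2"
    using finite_subset[OF V] unfolding V1_def V2_def by auto
  ultimately have prod_V: "(\<Prod>v\<in>V. (cmod (v - w v))\<^sup>2) = (\<Prod>v\<in>V1. (cmod (v - w v))\<^sup>2) * (\<Prod>v\<in>V2. (cmod (v - w v))\<^sup>2)"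
    and card_V: "card V = card V1 + card V2"
    by (simp_all add: prod.union_disjoint card_Un_disjoint)
  have "card V \<le> n"
    using card_mono[OF _ V] distinct_card[OF zs] unfolding n_def by simp
  then have exponent: "2 * n - card V = (n - card V1) + (n - card V2)"
    unfolding card_V by linarith
  have B_prod: "B V1 * B V2 = (\<Prod>v\<in>V. (cmod (v - w v))\<^sup>2) * c ^ card V * real n ^ (2 * n - card V)"
    unfolding B_def prod_V exponent unfolding card_V power_add by (simp only: mult_ac)
  have "M * B V1 \<ge> 0"
    unfolding M_def B_def c_def by (simp add: prod_nonneg)
  then have "(pairwise_dist_prod (set zs))\<^sup>2 \<le> (M * B V1) * (M * B V2)"
    unfolding power2_eq_square
    by (intro mult_mono half) (auto simp: V1_def V2_def pairwise_dist_prod_nonneg)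
  also have "\<dots> = M\<^sup>2 * (B V1 * B V2)"
    by (simp add: power2_eq_square mult_ac)
  finally show ?thesis
    unfolding B_prod M_def c_def n_def prod_power_distrib by (simp only: mult_ac)
qed

lemma pairwise_dist_prod_le:
  assumes zs: "distinct zs" and V: "V \<subseteq> set zs" and w: "\<And>v. v \<in> V \<Longrightarrow> w v \<in> set zs \<and> w v \<noteq> v"
  shows "pairwise_dist_prod (set zs)
    \<le> (\<Prod>v\<in>set zs. max 1 (cmod v) ^ (2 * (length zs - 1))) * (\<Prod>v\<in>V. cmod (v - w v))
       * (real (length zs) / sqrt 3) ^ card V * real (length zs) ^ length zs"
proof -
  define n where "n = length zs"
  define M where "M = (\<Prod>v\<in>set zs. max 1 (cmod v) ^ (2 * (n - 1)))"
  define S where "S = (\<Prod>v\<in>V. cmod (v - w v))"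
  have "card V \<le> n"
    using card_mono[OF _ V] distinct_card[OF zs] unfolding n_def by simp
  then have split: "real n ^ card V * real n ^ (2 * n - card V) = (real n ^ n)\<^sup>2"
    by (simp add: mult.commute flip: power_add power_mult)
  have cube: "real n ^ 3 / 3 = (real n * real n / 3) * real n"
    by (simp add: power3_eq_cube)
  have "(real n ^ 3 / 3) ^ card V * real n ^ (2 * n - card V)
      = (real n * real n / 3) ^ card V * (real n ^ card V * real n ^ (2 * n - card V))"
    unfolding cube power_mult_distrib by (simp only: mult_ac)
  also have "\<dots> = ((real n / sqrt 3) ^ card V)\<^sup>2 * (real n ^ n)\<^sup>2"
    unfolding split by (simp add: power2_eq_square flip: power_mult_distrib)
  finally have weights: "(real n ^ 3 / 3) ^ card V * real n ^ (2 * n - card V)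
      = ((real n / sqrt 3) ^ card V)\<^sup>2 * (real n ^ n)\<^sup>2" .
  have "(pairwise_dist_prod (set zs))\<^sup>2
      \<le> M\<^sup>2 * S\<^sup>2 * ((real n ^ 3 / 3) ^ card V * real n ^ (2 * n - card V))"
    using sq_pairwise_dist_prod_le[OF zs V w] unfolding M_def S_def n_def by (simp only: mult.assoc)
  also have "\<dots> = (M * S * (real n / sqrt 3) ^ card V * real n ^ n)\<^sup>2"
    unfolding weights power_mult_distrib by (simp only: mult_ac)
  finally show ?thesis
    unfolding M_def S_def n_def by (rule power2_le_imp_le) (intro mult_nonneg_nonneg prod_nonneg; simp)
qed

section \<open>Subdiscriminants\<close>

lemma root_list:
  fixes P :: "complex poly"
  assumes "P \<noteq> 0"
  shows "mset (root_list P) = proots P" "length (root_list P) = degree P"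
    "set (root_list P) = root_set P"
proof -
  show mset: "mset (root_list P) = proots P"
    unfolding root_list_def by (rule someI_ex) (rule ex_mset)
  show "length (root_list P) = degree P"
    using size_proots_complex[of P] mset by (metis size_mset)
  show "set (root_list P) = root_set P"
    using mset assms unfolding root_set_def by (metis set_count_proots set_mset_mset)
qed

lemma image_nth_eq_set_if_card_eq:
  assumes "I \<subseteq> {0..<length xs}" "card I = card (set xs)" "inj_on ((!) xs) I"
  shows "(!) xs ` I = set xs"
  using assms by (intro card_subset_eq) (auto simp: card_image)

text \<open>An injective index set of full size picks one position of each value; recording these
  positions embeds such sets into the product of the sets of positions of the values.\<close>

lemma card_inj_index_sets_le:
  "card {I. I \<subseteq> {0..<length xs} \<and> card I = card (set xs) \<and> inj_on ((!) xs) I}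
     \<le> (\<Prod>v\<in>set xs. count (mset xs) v)"
proof -
  define G where "G = {I. I \<subseteq> {0..<length xs} \<and> card I = card (set xs) \<and> inj_on ((!) xs) I}"
  define B where "B = Pi\<^sub>E (set xs) (\<lambda>v. {i. i < length xs \<and> xs ! i = v})"
  define pos where "pos = (\<lambda>I. restrict (the_inv_into I ((!) xs)) (set xs))"
  have image: "(!) xs ` I = set xs" if "I \<in> G" for I
    using that image_nth_eq_set_if_card_eq unfolding G_def by blast
  have "pos ` G \<subseteq> B"
  proof safe
    fix I assume I: "I \<in> G"
    then have inj: "inj_on ((!) xs) I" and sub: "I \<subseteq> {0..<length xs}" unfolding G_def by auto
    show "pos I \<in> B"
      unfolding B_def pos_def
      using image[OF I] the_inv_into_into[OF inj, of _ I] f_the_inv_into_f[OF inj] sub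
      by (fastforce simp: restrict_PiE_iff)
  qed
  moreover have "inj_on pos G"
  proof (rule inj_onI)
    fix I J assume I: "I \<in> G" and J: "J \<in> G" and eq: "pos I = pos J"
    have "K = pos K ` set xs" if "K \<in> G" for K
      using the_inv_into_onto[of "(!) xs" K] image[OF that] that unfolding G_def pos_def by auto
    then show "I = J"
      using I J eq by metis
  qed
  ultimately have "card G \<le> card B"
    by (intro card_inj_on_le) (auto simp: B_def intro!: finite_PiE)
  also have "card B = (\<Prod>v\<in>set xs. card {i. i < length xs \<and> xs ! i = v})"
    unfolding B_def by (rule card_PiE) simp
  also have "\<dots> = (\<Prod>v\<in>set xs. count (mset xs) v)"
    by (intro prod.cong refl)
      (simp add: count_mset count_list_eq_length_filter length_filter_conv_card eq_commute)
  finally show ?thesis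
    unfolding G_def .
qed

lemma norm_prod_sq_diff_le:
  fixes xs :: "complex list"
  assumes I: "I \<subseteq> {0..<length xs}" "card I = card (set xs)"
  shows "cmod (\<Prod>p\<in>{(i, j). i \<in> I \<and> j \<in> I \<and> i < j}. (xs ! fst p - xs ! snd p) ^ 2)
     \<le> (if inj_on ((!) xs) I then pairwise_dist_prod (set xs) else 0)"
proof (cases "inj_on ((!) xs) I")
  case True
  have "finite I" using I finite_subset by blast
  then have "cmod (\<Prod>p\<in>{(i, j). i \<in> I \<and> j \<in> I \<and> i < j}. (xs ! fst p - xs ! snd p) ^ 2)
      = pairwise_dist_prod ((!) xs ` I)"
    using prod_sq_dist_less_pairs[OF _ True]
    by (simp add: norm_power case_prod_beta flip: prod_norm)
  then show ?thesis
    using True image_nth_eq_set_if_card_eq[OF I True] by simp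
next
  case False
  then obtain i j where ij: "i \<in> I" "j \<in> I" "i < j" "xs ! i = xs ! j"
    unfolding inj_on_def by (metis linorder_neqE_nat)
  have "finite {(i, j). i \<in> I \<and> j \<in> I \<and> i < j}"
    using I by (auto intro: finite_subset[of _ "I \<times> I"] finite_subset[of I])
  then have "(\<Prod>p\<in>{(i, j). i \<in> I \<and> j \<in> I \<and> i < j}. (xs ! fst p - xs ! snd p) ^ 2) = 0"
    by (intro prod_zero bexI[of _ "(i, j)"]) (use ij in auto)
  then show ?thesis
    using False by simp
qed

lemma norm_sDisc_le:
  fixes P :: "complex poly"
  assumes P: "P \<noteq> 0" and r: "r = card (root_set P)"
  shows "cmod (sDisc (degree P - r) P)
    \<le> cmod (lead_coeff P) ^ (2 * (r - 1)) * real (\<Prod>v\<in>root_set P. order v P)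
       * pairwise_dist_prod (root_set P)"
proof -
  define d where "d = degree P"
  define xs where "xs = root_list P"
  define R where "R = root_set P"
  have xs: "mset xs = proots P" "length xs = d" "set xs = R"
    using root_list[OF P] unfolding xs_def d_def R_def by auto
  have "r \<le> d" using r xs card_length unfolding R_def by metis
  define Is where "Is = {I. I \<subseteq> {0..<d} \<and> card I = r}"
  define g where "g = (\<lambda>I. \<Prod>p\<in>{(i, j). i \<in> I \<and> j \<in> I \<and> i < j}. (xs ! fst p - xs ! snd p) ^ 2)"
  have "finite Is" unfolding Is_def by (rule finite_subset[of _ "Pow {0..<d}"]) auto
  have sDisc: "sDisc (d - r) P = lead_coeff P ^ (2 * (r - 1)) * (\<Sum>I\<in>Is. g I)"
    using \<open>r \<le> d\<close> unfolding sDisc_def Let_def Is_def g_def xs_def d_def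
    by (simp add: right_diff_distrib')
  have "cmod (g I) \<le> (if inj_on ((!) xs) I then pairwise_dist_prod R else 0)" if "I \<in> Is" for I
    using norm_prod_sq_diff_le[of I xs] that xs r unfolding Is_def g_def R_def by auto
  then have "cmod (\<Sum>I\<in>Is. g I) \<le> (\<Sum>I\<in>Is. if inj_on ((!) xs) I then pairwise_dist_prod R else 0)"
    by (intro order.trans[OF norm_sum] sum_mono)
  also have "\<dots> = real (card {I\<in>Is. inj_on ((!) xs) I}) * pairwise_dist_prod R"
    using \<open>finite Is\<close> by (simp add: sum.inter_filter[symmetric])
  also have "\<dots> \<le> real (\<Prod>v\<in>R. count (mset xs) v) * pairwise_dist_prod R"
  proof (intro mult_right_mono pairwise_dist_prod_nonneg)
    have "{I\<in>Is. inj_on ((!) xs) I}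
        = {I. I \<subseteq> {0..<length xs} \<and> card I = card (set xs) \<and> inj_on ((!) xs) I}"
      unfolding Is_def using xs r R_def by auto
    then show "real (card {I\<in>Is. inj_on ((!) xs) I}) \<le> real (\<Prod>v\<in>R. count (mset xs) v)"
      using card_inj_index_sets_le[of xs] unfolding xs(3) by (simp only: of_nat_le_iff)
  qed
  finally show ?thesis
    using P xs(1) unfolding d_def[symmetric] R_def[symmetric] sDisc
    by (simp add: norm_mult norm_power mult.assoc mult_left_mono)
qed

section \<open>Root multiplicities and the Mahler measure\<close>

lemma cube_le_3_power: "(c::nat) ^ 3 \<le> 3 ^ c"
proof (cases "c \<ge> 3")
  case True
  then show ?thesis
  proof (induction c rule: nat_induct_at_least)
    case (Suc n)
    then have "(Suc n) ^ 3 \<le> 3 * n ^ 3"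
      by (auto simp: power3_eq_cube algebra_simps le_iff_add)
    also have "\<dots> \<le> 3 * 3 ^ n" using Suc.IH by simp
    finally show ?case by simp
  qed simp
next
  case False
  then have "c \<in> {0, 1, 2}" by auto
  then show ?thesis by auto
qed

lemma cube_le_9_power: "(c::nat) \<ge> 1 \<Longrightarrow> c ^ 3 \<le> 9 ^ (c - 1)"
proof (induction c rule: nat_induct_at_least)
  case (Suc n)
  then have "(Suc n) ^ 3 \<le> 9 * n ^ 3"
    by (auto simp: power3_eq_cube algebra_simps le_iff_add)
  also have "\<dots> \<le> 9 * 9 ^ (n - 1)" using Suc.IH by simp
  also have "\<dots> = 9 ^ (Suc n - 1)" using Suc.hyps by (cases n) auto
  finally show ?case .
qed simp

lemma le_3_powr_if_cube_le:
  assumes "(x::real) \<ge> 0" "x ^ 3 \<le> 3 powr (3 * a)"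
  shows "x \<le> 3 powr a"
proof (rule power_le_imp_le_base)
  show "x ^ Suc 2 \<le> (3 powr a) ^ Suc 2"
    using assms(2) powr_power[of 3 a 3] by (simp add: eval_nat_numeral mult.commute)
qed simp

lemma nat_le_3_powr: "real (c::nat) \<le> 3 powr (real c / 3)"
proof (rule le_3_powr_if_cube_le)
  have "(real c) ^ 3 \<le> 3 ^ c"
    using cube_le_3_power[of c] by (metis of_nat_le_iff of_nat_power of_nat_numeral)
  then show "(real c) ^ 3 \<le> 3 powr (3 * (real c / 3))"
    by (simp add: powr_realpow)
qed simp

lemma nat_le_3_powr_pred: "(c::nat) \<ge> 1 \<Longrightarrow> real c \<le> 3 powr (2 * (real c - 1) / 3)"
proof (rule le_3_powr_if_cube_le)
  assume c: "c \<ge> 1"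
  have "(real c) ^ 3 \<le> 9 ^ (c - 1)"
    using cube_le_9_power[OF c] by (metis of_nat_le_iff of_nat_power of_nat_numeral)
  also have "(9::real) ^ (c - 1) = 3 ^ (2 * (c - 1))"
    by (simp add: power_mult)
  also have "\<dots> = 3 powr real (2 * (c - 1))"
    by (rule powr_realpow[symmetric]) simp
  also have "real (2 * (c - 1)) = 3 * (2 * (real c - 1) / 3)"
    using c by (simp add: of_nat_diff)
  finally show "(real c) ^ 3 \<le> 3 powr (3 * (2 * (real c - 1) / 3))" .
qed simp

lemma prod_le_3_powr_min:
  fixes m :: "'a \<Rightarrow> nat"
  assumes "finite R" and m: "\<And>v. v \<in> R \<Longrightarrow> m v \<ge> 1"
  shows "real (\<Prod>v\<in>R. m v)
    \<le> 3 powr (min (\<Sum>v\<in>R. real (m v)) (2 * (\<Sum>v\<in>R. real (m v)) - 2 * real (card R)) / 3)"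
proof -
  have "real (\<Prod>v\<in>R. m v) \<le> (\<Prod>v\<in>R. 3 powr (real (m v) / 3))"
    unfolding of_nat_prod by (intro prod_mono) (auto simp: nat_le_3_powr)
  also have "\<dots> = 3 powr ((\<Sum>v\<in>R. real (m v)) / 3)"
    by (simp add: powr_sum sum_divide_distrib)
  finally have by_sum: "real (\<Prod>v\<in>R. m v) \<le> 3 powr ((\<Sum>v\<in>R. real (m v)) / 3)" .
  have "real (m v) \<le> 3 powr (2 * (real (m v) - 1) / 3)" if "v \<in> R" for v
    using nat_le_3_powr_pred[OF m[OF that]] .
  then have "real (\<Prod>v\<in>R. m v) \<le> (\<Prod>v\<in>R. 3 powr (2 * (real (m v) - 1) / 3))"
    unfolding of_nat_prod by (intro prod_mono) auto
  also have "\<dots> = 3 powr (\<Sum>v\<in>R. 2 * (real (m v) - 1) / 3)"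
    by (rule powr_sum[symmetric]) simp
  also have "(\<Sum>v\<in>R. 2 * (real (m v) - 1) / 3) = (2 * (\<Sum>v\<in>R. real (m v)) - 2 * real (card R)) / 3"
    unfolding sum_divide_distrib[symmetric] sum_distrib_left[symmetric] sum_subtractf
    by (simp add: right_diff_distrib)
  finally have by_excess: "real (\<Prod>v\<in>R. m v)
      \<le> 3 powr ((2 * (\<Sum>v\<in>R. real (m v)) - 2 * real (card R)) / 3)" .
  show ?thesis
    using by_sum by_excess by (simp add: min_def)
qed

lemma sum_order_root_set:
  fixes P :: "complex poly"
  assumes "P \<noteq> 0"
  shows "(\<Sum>v\<in>root_set P. order v P) = degree P"
  using size_multiset_overloaded_eq[of "proots P"] size_proots_complex[of P] assms
  unfolding root_set_def by simp

lemma prod_order_le: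
  fixes P :: "complex poly"
  assumes P: "P \<noteq> 0"
  shows "real (\<Prod>v\<in>root_set P. order v P)
    \<le> 3 powr (min (real (degree P)) (2 * real (degree P) - 2 * real (card (root_set P))) / 3)"
proof -
  have "finite (root_set P)"
    unfolding root_set_def using P by (rule poly_roots_finite)
  moreover have "order v P \<ge> 1" if "v \<in> root_set P" for v
    using that P unfolding root_set_def by (simp add: Suc_le_eq order_gt_0_iff)
  ultimately show ?thesis
    using prod_le_3_powr_min[of "root_set P" "\<lambda>v. order v P"] sum_order_root_set[OF P]
    by (simp flip: of_nat_sum)
qed

lemma mahler_measure_ge:
  fixes P :: "complex poly"
  assumes P: "P \<noteq> 0"
  shows "cmod (lead_coeff P) * (\<Prod>v\<in>root_set P. max 1 (cmod v)) \<le> mahler_measure P"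
proof -
  have "max 1 (cmod v) \<le> max 1 (cmod v) ^ order v P" if "v \<in> root_set P" for v
    using that P unfolding root_set_def by (intro self_le_power) (auto simp: order_gt_0_iff)
  then have "(\<Prod>v\<in>root_set P. max 1 (cmod v)) \<le> (\<Prod>v\<in>root_set P. max 1 (cmod v) ^ order v P)"
    by (intro prod_mono) auto
  also have "\<dots> = prod_mset (image_mset (\<lambda>x. max 1 (cmod x)) (proots P))"
    using P unfolding image_prod_mset_multiplicity root_set_def by simp
  finally show ?thesis
    unfolding mahler_measure_def by (simp add: mult_left_mono)
qed

section \<open>The separation bound\<close>

lemma sep_attained:
  fixes P :: "complex poly"
  assumes P: "P \<noteq> 0" and two: "card (root_set P) \<ge> 2" and v: "v \<in> root_set P"
  obtains w where "w \<in> root_set P" "w \<noteq> v" "sep P v = cmod (v - w)"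
proof -
  have fin: "finite (root_set P)"
    unfolding root_set_def using P by (rule poly_roots_finite)
  have "root_set P \<noteq> {v}"
    using two by auto
  then have "root_set P - {v} \<noteq> {}"
    using v by auto
  then have "Min ((\<lambda>w. cmod (v - w)) ` (root_set P - {v})) \<in> (\<lambda>w. cmod (v - w)) ` (root_set P - {v})"
    using fin by (intro Min_in) auto
  moreover have "{cmod (v - w) | w. w \<in> root_set P \<and> w \<noteq> v} = (\<lambda>w. cmod (v - w)) ` (root_set P - {v})"
    by auto
  ultimately show ?thesis
    using that unfolding sep_def by auto
qed

lemma norm_sDisc_le_prod_sep:
  fixes P :: "complex poly"
  assumes P: "P \<noteq> 0" and r: "r = card (root_set P)" "r \<ge> 2" and V: "V \<subseteq> root_set P"
  shows "cmod (sDisc (degree P - r) P)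
    \<le> mahler_measure P ^ (2 * (r - 1)) * (\<Prod>v\<in>V. sep P v) * (real r / sqrt 3) ^ card V * real r ^ r
       * 3 powr (min (real (degree P)) (2 * real (degree P) - 2 * real r) / 3)"
proof -
  define e where "e = 2 * (r - 1)"
  define a where "a = cmod (lead_coeff P)"
  define C where "C = 3 powr (min (real (degree P)) (2 * real (degree P) - 2 * real r) / 3)"
  define W where "W = (\<Prod>v\<in>V. sep P v) * (real r / sqrt 3) ^ card V * real r ^ r"
  obtain zs where zs: "distinct zs" "set zs = root_set P"
    using finite_distinct_list[OF poly_roots_finite[OF P]] unfolding root_set_def by blast
  have length_zs: "length zs = r"
    using distinct_card[OF zs(1)] zs(2) r by simp
  have "\<forall>v\<in>V. \<exists>w. w \<in> root_set P \<and> w \<noteq> v \<and> sep P v = cmod (v - w)"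
    using sep_attained[OF P] r V by blast
  then obtain w where w: "\<And>v. v \<in> V \<Longrightarrow> w v \<in> root_set P \<and> w v \<noteq> v \<and> sep P v = cmod (v - w v)"
    by metis
  have dist: "pairwise_dist_prod (root_set P) \<le> (\<Prod>v\<in>root_set P. max 1 (cmod v) ^ e) * W"
    using pairwise_dist_prod_le[of zs V w] zs length_zs V w
    unfolding W_def e_def by (simp add: mult.assoc)
  have mahler: "a ^ e * (\<Prod>v\<in>root_set P. max 1 (cmod v) ^ e) \<le> mahler_measure P ^ e"
    using power_mono[OF mahler_measure_ge[OF P], of e]
    unfolding a_def by (simp add: power_mult_distrib prod_power_distrib prod_nonneg)
  have orders: "real (\<Prod>v\<in>root_set P. order v P) \<le> C"
    using prod_order_le[OF P] unfolding C_def r(1) .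
  have "W \<ge> 0"
    using w unfolding W_def by (intro mult_nonneg_nonneg prod_nonneg) auto
  have "cmod (sDisc (degree P - r) P)
      \<le> a ^ e * real (\<Prod>v\<in>root_set P. order v P) * pairwise_dist_prod (root_set P)"
    using norm_sDisc_le[OF P r(1)] unfolding a_def e_def .
  also have "\<dots> \<le> a ^ e * C * ((\<Prod>v\<in>root_set P. max 1 (cmod v) ^ e) * W)"
    using dist orders unfolding a_def
    by (intro mult_mono mult_left_mono) (auto simp: pairwise_dist_prod_nonneg prod_nonneg C_def)
  also have "\<dots> = (a ^ e * (\<Prod>v\<in>root_set P. max 1 (cmod v) ^ e)) * (W * C)"
    by (simp only: mult_ac)
  also have "\<dots> \<le> mahler_measure P ^ e * (W * C)"
    using mahler \<open>W \<ge> 0\<close> unfolding C_def by (intro mult_right_mono) auto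
  finally show ?thesis
    unfolding e_def W_def C_def by (simp only: mult.assoc)
qed

theorem theorem9:
  fixes P :: "complex poly" and V' :: "complex set" and d r :: nat
  assumes "P \<noteq> 0"
    and "d = degree P"
    and "r = card (root_set P)"
    and "r \<ge> 2"
    and "V' \<subseteq> root_set P"
  shows "(\<Prod>v\<in>V'. sep P v) \<ge>
     cmod (sDisc (d - r) P) / mahler_measure P ^ (2 * (r - 1))
     * (real r / sqrt 3) powr (- real (card V'))
     * real r powr (- real r)
     * (1 / 3) powr (min (real d) (2 * real d - 2 * real r) / 3)"
proof -
  define M where "M = mahler_measure P ^ (2 * (r - 1))"
  define q where "q = (real r / sqrt 3) ^ card V'"
  define C where "C = 3 powr (min (real d) (2 * real d - 2 * real r) / 3)"
  have "cmod (lead_coeff P) * (\<Prod>v\<in>root_set P. max 1 (cmod v)) > 0"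
    using assms(1) by (simp add: prod_pos)
  then have "M > 0"
    using mahler_measure_ge[OF assms(1)] unfolding M_def by simp
  moreover have "q > 0" "real r > 0" "C > 0"
    using assms(4) unfolding q_def C_def by auto
  moreover have "cmod (sDisc (d - r) P) \<le> M * (\<Prod>v\<in>V'. sep P v) * q * real r ^ r * C"
    using norm_sDisc_le_prod_sep[OF assms(1,3,4,5)] unfolding M_def q_def C_def assms(2) .
  ultimately have "cmod (sDisc (d - r) P) / (M * q * real r ^ r * C) \<le> (\<Prod>v\<in>V'. sep P v)"
    by (simp add: divide_le_eq mult_ac)
  moreover have "(real r / sqrt 3) powr (- real (card V')) = 1 / q"
    "real r powr (- real r) = 1 / real r ^ r" "(1 / 3) powr (min (real d) (2 * real d - 2 * real r) / 3) = 1 / C"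
    using \<open>real r > 0\<close> unfolding q_def C_def by (simp_all add: powr_minus_divide powr_realpow powr_divide power_divide)
  ultimately show ?thesis
    unfolding M_def by simp
qed

end
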